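(* Let $\Omega_0,\Omega_1\subset\mathbb{R}^d$ be bounded Lipschitz domains with nonempty interior, $\Sigma_0,\Sigma_1$ symmetric positive definite $d\times d$ matrices and $m_0,m_1\in\mathbb{R}^d$. Define the truncated Gaussians $$d\mu(x)=\frac1{Z_0}\exp\Big(-\tfrac12(x-m_0)^\top\Sigma_0^{-1}(x-m_0)\Big)\mathbf 1_{\Omega_0}(x)dx,\quad d\nu(y)=\frac1{Z_1}\exp\Big(-\tfrac12(y-m_1)^\top\Sigma_1^{-1}(y-m_1)\Big)\mathbf 1_{\Omega_1}(y)dy,$$ with normalizing constants $Z_0,Z_1>0$, and consider the cost $c(x,y)=\frac12\|x-y\|^2$. If the (unregularized) Monge map transporting $\mu$ to $\nu$ is affine, $T(x)=Ax+a$ with $A=A^\top\succ0$ and $a\in\mathbb{R}^d$, then necessarily $$\Omega_1=A\Omega_0+a\ \text{(up to Lebesgue-null sets)},\qquad m_1=Am_0+a,\qquad \Sigma_1=A\Sigma_0A.$$ Conversely, if these three conditions hold for some $A=A^\top\succ0$ and $a\in\mathbb{R}^d$, then $T(x)=Ax+a$ satisfies $T_\#\mu=\nu$ and is the Monge map.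
   Context: The Monge map is the optimal transport map for the quadratic cost, i.e. the map $T=\nabla\varphi$ with $\varphi$ convex and $T_\#\mu=\nu$ (Brenier map). *)

theory Defs
  imports "HOL-Probability.Probability"
begin

definition sym_posdef :: "real^'n^'n \<Rightarrow> bool" where
  "sym_posdef M \<longleftrightarrow> transpose M = M \<and> (\<forall>x. x \<noteq> 0 \<longrightarrow> x \<bullet> (M *v x) > 0)"

text \<open>Lipschitz domain: nonempty open connected set whose boundary is locally the graph of a
  Lipschitz function.\<close>
definition lipschitz_domain :: "(real^'n) set \<Rightarrow> bool" where
  "lipschitz_domain \<Omega> \<longleftrightarrow> open \<Omega> \<and> connected \<Omega> \<and> \<Omega> \<noteq> {} \<and>
     (\<forall>p \<in> frontier \<Omega>. \<exists>r>0. \<exists>e g L. norm e = 1 \<and> L-lipschitz_on UNIV g \<and>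
        \<Omega> \<inter> ball p r =
          {x \<in> ball p r. (x - p) \<bullet> e > g ((x - p) - ((x - p) \<bullet> e) *\<^sub>R e)})"

definition gauss_weight :: "real^'n \<Rightarrow> real^'n^'n \<Rightarrow> real^'n \<Rightarrow> real" where
  "gauss_weight m \<Sigma> x = exp (- (1/2) * ((x - m) \<bullet> (matrix_inv \<Sigma> *v (x - m))))"

definition gauss_const :: "(real^'n) set \<Rightarrow> real^'n \<Rightarrow> real^'n^'n \<Rightarrow> real" where
  "gauss_const \<Omega> m \<Sigma> = integral \<Omega> (gauss_weight m \<Sigma>)"

definition trunc_gauss :: "(real^'n) set \<Rightarrow> real^'n \<Rightarrow> real^'n^'n \<Rightarrow> (real^'n) measure" where
  "trunc_gauss \<Omega> m \<Sigma> = density lborel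
     (\<lambda>x. ennreal (indicator \<Omega> x * gauss_weight m \<Sigma> x / gauss_const \<Omega> m \<Sigma>))"

text \<open>Monge (Brenier) map for the quadratic cost: T pushes \<mu> to \<nu> and T = \<nabla>\<phi>
  \<mu>-a.e. for a convex \<phi>.\<close>
definition monge_map :: "(real^'n) measure \<Rightarrow> (real^'n) measure \<Rightarrow> (real^'n \<Rightarrow> real^'n) \<Rightarrow> bool" where
  "monge_map \<mu> \<nu> T \<longleftrightarrow> T \<in> borel_measurable \<mu> \<and> distr \<mu> lborel T = \<nu> \<and>
     (\<exists>\<phi>::real^'n \<Rightarrow> real. convex_on UNIV \<phi> \<and>
        (AE x in \<mu>. (\<phi> has_derivative (\<lambda>h. T x \<bullet> h)) (at x)))"

end

theory Submission
  imports Defs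
begin

(*
  The affine map T x = A x + a is the gradient of the convex potential
  x \<mapsto> x \<bullet> A x / 2 + a \<bullet> x, so it is the Monge map exactly when it pushes \<mu> to \<nu>.
  By the change of variables formula, T pushes \<mu> to a measure with density proportional to
  the indicator of T \<Omega>0 times the Gaussian weight with mean A m0 + a and covariance A \<Sigma>0 A.
  Two such densities are equal a.e. iff their supports agree up to a null set and, on the
  nonempty open intersection of the supports, the two continuous Gaussian weights are
  proportional.  Taking logarithms, two quadratics then differ by a constant on a ball, which
  forces equal means and covariances.  Conversely, equal supports and parameters make the
  densities agree up to a constant factor, which is 1 because both measures are probability
  measures.
*)

section \<open>Matrices and quadratic forms\<close>

lemma matrix_inv_right: "invertible A \<Longrightarrow> A ** matrix_inv A = mat 1"
  and matrix_inv_left: "invertible A \<Longrightarrow> matrix_inv A ** A = mat 1"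
  unfolding invertible_def matrix_inv_def by (metis (mono_tags, lifting) someI_ex)+

lemma matrix_inv_vector_cancel:
  assumes "invertible A"
  shows "matrix_inv A *v (A *v x) = x" and "A *v (matrix_inv A *v x) = x"
  using assms by (simp_all add: matrix_vector_mul_assoc matrix_inv_left matrix_inv_right)

lemma matrix_inv_eqI:
  fixes A B :: "real^'n^'n"
  assumes "B ** A = mat 1"
  shows "matrix_inv A = B"
proof -
  have "invertible A" using assms invertible_left_inverse by blast
  then have "B = B ** (A ** matrix_inv A)" by (simp add: matrix_inv_right)
  also have "\<dots> = matrix_inv A" by (simp add: matrix_mul_assoc assms)
  finally show ?thesis by simp
qed

lemma transpose_matrix_inv:
  fixes A :: "real^'n^'n"
  assumes "invertible A"
  shows "transpose (matrix_inv A) = matrix_inv (transpose A)"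
proof (rule matrix_inv_eqI[symmetric])
  have "transpose (matrix_inv A) ** transpose A = transpose (A ** matrix_inv A)"
    by (rule matrix_transpose_mul[symmetric])
  then show "transpose (matrix_inv A) ** transpose A = mat 1"
    by (simp add: matrix_inv_right[OF assms])
qed

lemma matrix_inv_congruence:
  fixes A S :: "real^'n^'n"
  assumes "invertible A" "invertible S"
  shows "matrix_inv (A ** S ** transpose A) = transpose (matrix_inv A) ** matrix_inv S ** matrix_inv A"
proof (rule matrix_inv_eqI)
  have "transpose (matrix_inv A) ** matrix_inv S ** matrix_inv A ** (A ** S ** transpose A)
      = transpose (matrix_inv A) ** (matrix_inv S ** ((matrix_inv A ** A) ** S)) ** transpose A"
    by (simp add: matrix_mul_assoc)
  also have "\<dots> = transpose (matrix_inv A) ** transpose A"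
    by (simp add: matrix_inv_left assms)
  also have "\<dots> = transpose (A ** matrix_inv A)"
    by (rule matrix_transpose_mul[symmetric])
  also have "\<dots> = mat 1"
    by (simp add: matrix_inv_right assms)
  finally show "transpose (matrix_inv A) ** matrix_inv S ** matrix_inv A ** (A ** S ** transpose A) = mat 1" .
qed

lemma inner_matrix_vector_transpose:
  fixes M :: "real^'n^'m"
  shows "x \<bullet> (M *v y) = (transpose M *v x) \<bullet> y"
  by (simp add: dot_lmul_matrix)

lemma inner_symmetric_matrix:
  fixes M :: "real^'n^'n"
  assumes "transpose M = M"
  shows "x \<bullet> (M *v y) = y \<bullet> (M *v x)"
  by (metis assms inner_commute inner_matrix_vector_transpose)

lemma quadratic_form_add:
  fixes M :: "real^'n^'n"
  assumes "transpose M = M"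
  shows "(u + v) \<bullet> (M *v (u + v)) = u \<bullet> (M *v u) + 2 * (v \<bullet> (M *v u)) + v \<bullet> (M *v v)"
  using inner_symmetric_matrix[OF assms, of u v]
  by (simp add: matrix_vector_right_distrib inner_add_left inner_add_right)

lemma symmetric_matrix_eq_0_if_quadratic_form_0:
  fixes M :: "real^'n^'n"
  assumes "transpose M = M" and "\<And>v. v \<bullet> (M *v v) = 0"
  shows "M = 0"
proof -
  have "M *v v = 0" for v
    using quadratic_form_add[OF assms(1), of v "M *v v"] assms(2)[of v] assms(2)[of "M *v v"]
      assms(2)[of "v + M *v v"] by simp
  then show ?thesis by (simp add: matrix_eq)
qed

lemma sym_posdef_invertible:
  assumes "sym_posdef M"
  shows "invertible M"
proof -
  have "inj ((*v) M)"
  proof (rule injI)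
    fix x y assume "M *v x = M *v y"
    then have "(x - y) \<bullet> (M *v (x - y)) = 0" by (simp add: matrix_vector_mult_diff_distrib)
    then show "x = y"
      using assms unfolding sym_posdef_def by (metis less_irrefl right_minus_eq)
  qed
  then show ?thesis using matrix_left_invertible_injective invertible_left_inverse by blast
qed

lemma sym_posdef_congruence:
  fixes A S :: "real^'n^'n"
  assumes "invertible A" and "sym_posdef S"
  shows "sym_posdef (A ** S ** transpose A)"
  unfolding sym_posdef_def
proof safe
  show "transpose (A ** S ** transpose A) = A ** S ** transpose A"
    using assms(2) by (simp add: sym_posdef_def matrix_transpose_mul matrix_mul_assoc)
  fix x :: "real^'n" assume "x \<noteq> 0"
  then have "transpose A *v x \<noteq> 0"
    using transpose_invertible[OF assms(1)] matrix_inv_vector_cancel(1) by (metis matrix_vector_mult_0_right)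
  then have "0 < (transpose A *v x) \<bullet> (S *v (transpose A *v x))"
    using assms(2) by (simp add: sym_posdef_def)
  also have "\<dots> = x \<bullet> ((A ** S ** transpose A) *v x)"
    by (simp add: inner_matrix_vector_transpose[of x A] matrix_vector_mul_assoc[symmetric])
  finally show "0 < x \<bullet> ((A ** S ** transpose A) *v x)" .
qed

lemma sym_posdef_matrix_inv:
  assumes "sym_posdef S"
  shows "sym_posdef (matrix_inv S)"
proof -
  have inv: "invertible S" using sym_posdef_invertible[OF assms] .
  then have "invertible (matrix_inv S)"
    using invertible_left_inverse matrix_inv_right by blast
  then have "sym_posdef (matrix_inv S ** S ** transpose (matrix_inv S))"
    using sym_posdef_congruence assms by blast
  moreover have "transpose (matrix_inv S) = matrix_inv S"
    using assms inv by (simp add: transpose_matrix_inv sym_posdef_def)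
  ultimately show ?thesis by (simp add: matrix_inv_left[OF inv])
qed

lemma quadratic_diff_const_on_ball_imp_eq:
  fixes P Q :: "real^'n^'n"
  assumes symP: "transpose P = P" and symQ: "transpose Q = Q" and "r > 0"
    and const: "\<And>y. y \<in> ball y0 r \<Longrightarrow> (y - m) \<bullet> (P *v (y - m)) - (y - n) \<bullet> (Q *v (y - n)) = C"
  shows "P = Q" and "P *v (y0 - m) = Q *v (y0 - n)"
proof -
  define D where "D = P *v (y0 - m) - Q *v (y0 - n)"
  define B where "B = P - Q"
  have symB: "transpose B = B"
    using symP symQ by (simp add: B_def transpose_def vec_eq_iff)
  have shift: "(y0 + v - m) \<bullet> (P *v (y0 + v - m)) - (y0 + v - n) \<bullet> (Q *v (y0 + v - n))
      = C + 2 * (v \<bullet> D) + v \<bullet> (B *v v)" for v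
  proof -
    have e: "y0 + v - m = (y0 - m) + v" "y0 + v - n = (y0 - n) + v" by simp_all
    show ?thesis
      unfolding e quadratic_form_add[OF symP] quadratic_form_add[OF symQ]
      using const[of y0] \<open>r > 0\<close>
      by (simp add: D_def B_def inner_diff_right matrix_vector_mult_diff_rdistrib)
  qed
  \<comment> \<open>comparing \<open>y0 + v\<close> with \<open>y0 - v\<close> separates the linear and the quadratic term in \<open>v\<close>\<close>
  have small: "v \<bullet> D = 0 \<and> v \<bullet> (B *v v) = 0" if "norm v < r" for v
  proof -
    have "y0 + v \<in> ball y0 r" "y0 + - v \<in> ball y0 r" using that by (simp_all add: dist_norm)
    moreover have "B *v (- v) = - (B *v v)"
      using matrix_vector_mult_diff_distrib[of B 0 v] by simp
    ultimately have "2 * (v \<bullet> D) + v \<bullet> (B *v v) = 0" "- 2 * (v \<bullet> D) + v \<bullet> (B *v v) = 0"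
      using shift[of v] shift[of "- v"] const by auto
    then show ?thesis by linarith
  qed
  have all: "v \<bullet> D = 0 \<and> v \<bullet> (B *v v) = 0" for v
  proof (cases "v = 0")
    case False
    define t where "t = r / (2 * norm v)"
    have "t > 0" "norm (t *\<^sub>R v) < r"
      using False \<open>r > 0\<close> by (simp_all add: t_def)
    then show ?thesis
      using small[of "t *\<^sub>R v"] by (simp add: matrix_vector_mult_scaleR)
  qed simp
  show "P = Q"
    using symmetric_matrix_eq_0_if_quadratic_form_0[OF symB] all by (simp add: B_def)
  show "P *v (y0 - m) = Q *v (y0 - n)"
    using all[of D] by (simp add: D_def)
qed

section \<open>Gaussian weights and truncated Gaussians\<close>

lemma gauss_weight_pos: "gauss_weight m S x > 0"
  by (simp add: gauss_weight_def)

lemma continuous_on_gauss_weight: "continuous_on X (gauss_weight m S)"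
  unfolding gauss_weight_def
  by (intro continuous_intros bounded_linear.continuous_on[OF matrix_vector_mul_bounded_linear])

lemma borel_measurable_gauss_weight [measurable]: "gauss_weight m S \<in> borel_measurable borel"
  by (intro borel_measurable_continuous_onI continuous_on_gauss_weight)

lemma gauss_weight_le_1:
  assumes "sym_posdef S"
  shows "gauss_weight m S x \<le> 1"
proof -
  have "0 \<le> (x - m) \<bullet> (matrix_inv S *v (x - m))"
    using sym_posdef_matrix_inv[OF assms] unfolding sym_posdef_def
    by (cases "x - m = 0") (auto intro: less_imp_le)
  then show ?thesis by (simp add: gauss_weight_def)
qed

lemma gauss_weight_affine_image:
  fixes A S :: "real^'n^'n"
  assumes "invertible A" and "invertible S"
  shows "gauss_weight m S (matrix_inv A *v (y - a)) = gauss_weight (A *v m + a) (A ** S ** transpose A) y"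
proof -
  define u where "u = y - (A *v m + a)"
  have "matrix_inv A *v (y - a) - m = matrix_inv A *v u"
    using matrix_inv_vector_cancel(1)[OF assms(1)] by (simp add: u_def algebra_simps)
  moreover have "u \<bullet> (matrix_inv (A ** S ** transpose A) *v u)
      = u \<bullet> (transpose (matrix_inv A) *v (matrix_inv S *v (matrix_inv A *v u)))"
    by (simp only: matrix_inv_congruence[OF assms] matrix_vector_mul_assoc matrix_mul_assoc)
  moreover have "\<dots> = (matrix_inv A *v u) \<bullet> (matrix_inv S *v (matrix_inv A *v u))"
    by (simp only: inner_matrix_vector_transpose[of u "transpose (matrix_inv A)"] transpose_transpose)
  ultimately show ?thesis by (simp add: gauss_weight_def u_def)
qed

lemma gauss_weight_proportional_on_ball_imp_eq:
  assumes "sym_posdef S" "sym_posdef S'" "c > 0" "c' > 0" "r > 0"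
    and eq: "\<And>y. y \<in> ball y0 r \<Longrightarrow> c * gauss_weight m S y = c' * gauss_weight m' S' y"
  shows "m = m'" and "S = S'"
proof -
  let ?P = "matrix_inv S" and ?P' = "matrix_inv S'"
  have diff: "(y - m) \<bullet> (?P *v (y - m)) - (y - m') \<bullet> (?P' *v (y - m')) = 2 * (ln c - ln c')"
    if "y \<in> ball y0 r" for y
  proof -
    have "ln (c * gauss_weight m S y) = ln (c' * gauss_weight m' S' y)" using eq[OF that] by simp
    then show ?thesis using \<open>c > 0\<close> \<open>c' > 0\<close> by (simp add: ln_mult gauss_weight_def)
  qed
  have sym: "transpose ?P = ?P" "transpose ?P' = ?P'"
    using sym_posdef_matrix_inv[OF assms(1)] sym_posdef_matrix_inv[OF assms(2)]
    by (simp_all add: sym_posdef_def)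
  have P: "?P = ?P'"
    by (rule quadratic_diff_const_on_ball_imp_eq(1)[OF sym \<open>r > 0\<close>]) (rule diff)
  have Pm: "?P *v (y0 - m) = ?P' *v (y0 - m')"
    by (rule quadratic_diff_const_on_ball_imp_eq(2)[OF sym \<open>r > 0\<close>]) (rule diff)
  have inv: "invertible S" "invertible S'" using assms(1,2) by (simp_all add: sym_posdef_invertible)
  have "S = matrix_inv ?P" "S' = matrix_inv ?P'"
    by (rule matrix_inv_eqI[symmetric], simp add: matrix_inv_right inv)+
  then show "S = S'" using P by simp
  have "y0 - m = y0 - m'"
    using arg_cong[OF Pm, of "(*v) S"] matrix_inv_vector_cancel(2)[OF inv(1)] P \<open>S = S'\<close> by simp
  then show "m = m'" by simp
qed

lemma open_nonempty_not_null_lborel: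
  fixes S :: "'a::euclidean_space set"
  assumes "open S" and "S \<noteq> {}"
  shows "S \<notin> null_sets lborel"
  using open_not_negligible[OF assms] negligible_iff_null_sets null_sets_completionI by blast

lemma nn_integral_gauss_weight:
  fixes \<Omega> :: "(real^'n) set"
  assumes "open \<Omega>" "bounded \<Omega>" "sym_posdef S"
  shows "(\<integral>\<^sup>+ x. ennreal (indicator \<Omega> x * gauss_weight m S x) \<partial>lborel) = ennreal (gauss_const \<Omega> m S)"
proof -
  let ?h = "\<lambda>x. indicator \<Omega> x * gauss_weight m S x"
  have int: "integrable lborel ?h"
  proof (rule integrableI_bounded_set[where A = \<Omega> and B = 1])
    show "emeasure lborel \<Omega> < \<infinity>" using emeasure_bounded_finite[OF assms(2)] .
    show "AE x in lborel. x \<in> \<Omega> \<longrightarrow> norm (?h x) \<le> 1"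
      by (simp add: abs_of_pos[OF gauss_weight_pos] gauss_weight_le_1[OF assms(3)])
  qed (use assms(1) in auto)
  have "?h = (\<lambda>x. if x \<in> \<Omega> then gauss_weight m S x else 0)"
    by (simp add: fun_eq_iff indicator_def)
  then have "gauss_const \<Omega> m S = integral UNIV ?h"
    unfolding gauss_const_def by (simp only: integral_restrict_UNIV)
  also have "\<dots> = integral\<^sup>L lborel ?h"
    using has_integral_integral_lborel[OF int] by (rule integral_unique)
  finally show ?thesis
    using nn_integral_eq_integral[OF int] gauss_weight_pos[of m S] by (simp add: less_imp_le)
qed

lemma gauss_const_pos:
  fixes \<Omega> :: "(real^'n) set"
  assumes "open \<Omega>" "bounded \<Omega>" "\<Omega> \<noteq> {}" "sym_posdef S"
  shows "gauss_const \<Omega> m S > 0"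
proof -
  let ?h = "\<lambda>x. ennreal (indicator \<Omega> x * gauss_weight m S x)"
  have [measurable]: "\<Omega> \<in> sets borel" using assms(1) by simp
  have "(\<integral>\<^sup>+ x. ?h x \<partial>lborel) \<noteq> 0"
  proof
    assume "(\<integral>\<^sup>+ x. ?h x \<partial>lborel) = 0"
    then have "AE x in lborel. ?h x = 0"
      by (subst (asm) nn_integral_0_iff_AE) measurable
    moreover have "?h x \<noteq> 0" if "x \<in> \<Omega>" for x
      using that gauss_weight_pos[of m S x] by (simp add: ennreal_eq_0_iff)
    ultimately have "AE x in lborel. x \<notin> \<Omega>"
      by (auto elim: AE_mp)
    then have "\<Omega> \<in> null_sets lborel"
      using assms(1) by (subst AE_iff_null_sets) auto
    then show False
      using open_nonempty_not_null_lborel[OF assms(1,3)] by blast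
  qed
  then show ?thesis
    using nn_integral_gauss_weight[OF assms(1,2,4)] ennreal_eq_0_iff[of "gauss_const \<Omega> m S"] by auto
qed

lemma emeasure_density_gauss_weight:
  fixes \<Omega> :: "(real^'n) set"
  assumes "open \<Omega>" "bounded \<Omega>" "\<Omega> \<noteq> {}" "sym_posdef S" "c \<ge> 0"
  shows "emeasure (density lborel (\<lambda>x. ennreal (c * indicator \<Omega> x * gauss_weight m S x))) UNIV
    = ennreal (c * gauss_const \<Omega> m S)"
proof -
  have [measurable]: "\<Omega> \<in> sets borel" using assms(1) by simp
  have "emeasure (density lborel (\<lambda>x. ennreal (c * indicator \<Omega> x * gauss_weight m S x))) UNIV
      = (\<integral>\<^sup>+ x. ennreal c * ennreal (indicator \<Omega> x * gauss_weight m S x) \<partial>lborel)"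
    using assms(5) by (subst emeasure_density) (auto intro!: nn_integral_cong simp: ennreal_mult' mult.assoc)
  also have "\<dots> = ennreal c * ennreal (gauss_const \<Omega> m S)"
    by (subst nn_integral_cmult) (auto simp: nn_integral_gauss_weight[OF assms(1,2,4)])
  finally show ?thesis using assms(5) by (simp add: ennreal_mult')
qed

lemma trunc_gauss_eq_density:
  "trunc_gauss \<Omega> m S
    = density lborel (\<lambda>x. ennreal (1 / gauss_const \<Omega> m S * indicator \<Omega> x * gauss_weight m S x))"
  unfolding trunc_gauss_def by (simp add: field_simps)

lemma emeasure_trunc_gauss_UNIV:
  fixes \<Omega> :: "(real^'n) set"
  assumes "open \<Omega>" "bounded \<Omega>" "\<Omega> \<noteq> {}" "sym_posdef S"
  shows "emeasure (trunc_gauss \<Omega> m S) UNIV = 1"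
  using emeasure_density_gauss_weight[OF assms, where c = "1 / gauss_const \<Omega> m S" and m = m]
    gauss_const_pos[OF assms, of m]
  by (simp add: trunc_gauss_eq_density)

lemma sets_trunc_gauss: "sets (trunc_gauss \<Omega> m S) = sets borel"
  and space_trunc_gauss: "space (trunc_gauss \<Omega> m S) = UNIV"
  by (simp_all add: trunc_gauss_def)

section \<open>Linear images of Lebesgue measure\<close>

definition scales_lebesgue :: "('a::euclidean_space \<Rightarrow> 'a) \<Rightarrow> real \<Rightarrow> bool" where
  "scales_lebesgue f c \<longleftrightarrow>
     (\<forall>S \<in> lmeasurable. f ` S \<in> lmeasurable \<and> measure lebesgue (f ` S) = c * measure lebesgue S)"

lemma scales_lebesgue_comp:
  fixes f g :: "'a::euclidean_space \<Rightarrow> 'a"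
  assumes f: "scales_lebesgue f c" and g: "scales_lebesgue g d"
  shows "scales_lebesgue (f \<circ> g) (c * d)"
  unfolding scales_lebesgue_def
proof
  fix S :: "'a set" assume "S \<in> lmeasurable"
  then have gS: "g ` S \<in> lmeasurable" "measure lebesgue (g ` S) = d * measure lebesgue S"
    using g by (simp_all add: scales_lebesgue_def)
  then have "f ` g ` S \<in> lmeasurable \<and> measure lebesgue (f ` g ` S) = c * measure lebesgue (g ` S)"
    using f unfolding scales_lebesgue_def by blast
  then show "(f \<circ> g) ` S \<in> lmeasurable \<and> measure lebesgue ((f \<circ> g) ` S) = c * d * measure lebesgue S"
    unfolding image_comp[symmetric] gS(2) by simp
qed

lemma scales_lebesgue_if_cbox:
  assumes "linear f" and "\<And>a b. measure lebesgue (f ` cbox a b) = c * measure lebesgue (cbox a b)"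
  shows "scales_lebesgue f c"
  unfolding scales_lebesgue_def using measure_linear_sufficient[OF assms(1) _ assms(2)] by auto

lemma scales_lebesgue_swap:
  fixes k l :: "'n::finite"
  shows "scales_lebesgue (\<lambda>x::real^'n. \<chi> i. x $ Transposition.transpose k l i) 1"
proof (rule scales_lebesgue_if_cbox)
  let ?h = "\<lambda>x::real^'n. \<chi> i. x $ Transposition.transpose k l i"
  show "linear ?h" by (rule linearI) (simp_all add: vec_eq_iff)
  fix a b :: "real^'n"
  have hh: "?h (?h x) = x" for x by simp
  have "?h ` cbox a b = ?h -` cbox a b"
  proof (intro set_eqI iffI)
    fix x assume "x \<in> ?h -` cbox a b"
    then show "x \<in> ?h ` cbox a b" by (intro image_eqI[of x ?h "?h x"]) (simp_all add: hh)
  qed (auto simp: hh)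
  also have "\<dots> = cbox (?h a) (?h b)"
    by (auto simp: mem_box_cart) (metis transpose_involutory)+
  finally have img: "?h ` cbox a b = cbox (?h a) (?h b)" .
  have "(\<Prod>i\<in>UNIV. ?h b $ i - ?h a $ i) = (\<Prod>i\<in>UNIV. b $ i - a $ i)"
    by (subst prod.permute[OF permutes_swap_id[of k UNIV l, simplified]]) (simp add: o_def)
  moreover have "cbox (?h a) (?h b) = {} \<longleftrightarrow> cbox a b = {}"
    using img by auto
  ultimately show "measure lebesgue (?h ` cbox a b) = 1 * measure lebesgue (cbox a b)"
    unfolding img by (simp add: content_cbox_if_cart)
qed

lemma scales_lebesgue_shear:
  fixes k l :: "'n::finite"
  assumes "k \<noteq> l"
  shows "scales_lebesgue (\<lambda>x::real^'n. \<chi> i. if i = k then x $ k + x $ l else x $ i) 1"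
proof (rule scales_lebesgue_if_cbox)
  let ?h = "\<lambda>x::real^'n. \<chi> i. if i = k then x $ k + x $ l else x $ i"
  show "linear ?h" by (rule linearI) (simp_all add: vec_eq_iff algebra_simps)
  fix a b :: "real^'n"
  show "measure lebesgue (?h ` cbox a b) = 1 * measure lebesgue (cbox a b)"
  proof (cases "cbox a b = {}")
    case False
    define v :: "real^'n" where "v = axis l (a $ l)"
    have h_add: "?h (v + x) = ?h v + ?h x" for x by (simp add: vec_eq_iff)
    have box: "cbox a b = (+) v ` cbox (a - v) (b - v)"
      using cbox_translation[of v "a - v" "b - v"] by simp
    then have "?h ` cbox a b = (+) (?h v) ` ?h ` cbox (a - v) (b - v)"
      by (simp add: image_comp o_def h_add)
    then have "measure lebesgue (?h ` cbox a b) = measure lebesgue (?h ` cbox (a - v) (b - v))"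
      by (simp add: measure_translation)
    also have "\<dots> = measure lebesgue (cbox (a - v) (b - v))"
      using False box \<open>k \<noteq> l\<close> by (intro measure_shear_interval) (auto simp: v_def)
    also have "\<dots> = measure lebesgue (cbox a b)"
      by (simp add: box measure_translation)
    finally show ?thesis by simp
  qed simp
qed

text \<open>\<open>measure_linear_image\<close> identifies the factor as \<open>\<bar>det (matrix f)\<bar>\<close>, but only for
  index types of class \<open>wellorder\<close>; for an arbitrary finite index type we only get its
  existence, which is all the change of variables below needs.\<close>

lemma linear_scales_lebesgue:
  fixes f :: "real^'n \<Rightarrow> real^'n"
  assumes "linear f"
  shows "\<exists>c. scales_lebesgue f c"
proof (rule induct_linear_elementary[OF assms])
  fix f g :: "real^'n \<Rightarrow> real^'n"
  assume "\<exists>c. scales_lebesgue f c" "\<exists>c. scales_lebesgue g c"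
  then show "\<exists>c. scales_lebesgue (f \<circ> g) c"
    using scales_lebesgue_comp by blast
next
  fix f :: "real^'n \<Rightarrow> real^'n" and i
  assume "linear f" and "\<And>x. f x $ i = 0"
  then have "\<not> inj f"
    by (metis linear_injective_imp_surjective one_neq_zero surjE vec_component)
  then have "negligible (f ` S)" for S
    using \<open>linear f\<close> negligible_linear_singular_image by blast
  then have "scales_lebesgue f 0"
    unfolding scales_lebesgue_def
    by (simp add: negligible_imp_measure0 negligible_iff_null_sets fmeasurableI_null_sets)
  then show "\<exists>c. scales_lebesgue f c" ..
next
  fix c :: "'n \<Rightarrow> real"
  have "scales_lebesgue (\<lambda>x. \<chi> i. c i * x $ i) \<bar>prod c UNIV\<bar>"
    unfolding scales_lebesgue_def
  proof
    fix S :: "(real^'n) set" assume "S \<in> lmeasurable"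
    then show "(\<lambda>x. \<chi> i. c i * x $ i) ` S \<in> lmeasurable \<and>
        measure lebesgue ((\<lambda>x. \<chi> i. c i * x $ i) ` S) = \<bar>prod c UNIV\<bar> * measure lebesgue S"
      by (intro conjI measurable_stretch measure_stretch)
  qed
  then show "\<exists>d. scales_lebesgue (\<lambda>x. \<chi> i. c i * x $ i) d" ..
next
  fix k l :: 'n
  show "\<exists>c. scales_lebesgue (\<lambda>x::real^'n. \<chi> i. x $ Transposition.transpose k l i) c"
    using scales_lebesgue_swap ..
next
  fix k l :: 'n
  assume "k \<noteq> l"
  show "\<exists>c. scales_lebesgue (\<lambda>x::real^'n. \<chi> i. if i = k then x $ k + x $ l else x $ i) c"
    using scales_lebesgue_shear[OF \<open>k \<noteq> l\<close>] ..
qed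

lemma scales_lebesgue_inverse_pos:
  fixes L L' :: "real^'n \<Rightarrow> real^'n"
  assumes "linear L" and LL': "\<And>y. L (L' y) = y" and c: "scales_lebesgue L' c"
  shows "c > 0"
proof -
  obtain d where d: "scales_lebesgue L d"
    using linear_scales_lebesgue[OF assms(1)] by blast
  let ?U = "cbox 0 (One::real^'n)"
  have U: "?U \<in> lmeasurable" "measure lebesgue ?U = 1" by simp_all
  then have "c = measure lebesgue (L' ` ?U)"
    using c by (simp add: scales_lebesgue_def)
  moreover have "L ` L' ` ?U = ?U" using LL' by (force simp: image_comp)
  then have "d * c = 1"
    using c d U unfolding scales_lebesgue_def by (metis mult.right_neutral)
  ultimately show ?thesis
    by (metis measure_nonneg mult_zero_right order_le_less zero_neq_one)
qed

lemma borel_measurable_linear_affine: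
  fixes L :: "'a::euclidean_space \<Rightarrow> 'b::euclidean_space"
  assumes "linear L"
  shows "(\<lambda>x. L x + a) \<in> borel_measurable borel"
  using assms by (intro borel_measurable_continuous_onI continuous_intros linear_continuous_on)
    (simp add: linear_conv_bounded_linear)

lemma emeasure_lborel_vimage_affine_box:
  fixes L L' :: "real^'n \<Rightarrow> real^'n"
  assumes "linear L" and L'L: "\<And>x. L' (L x) = x" and LL': "\<And>y. L (L' y) = y"
    and c: "scales_lebesgue L' c"
  shows "emeasure lborel ((\<lambda>x. L x + a) -` box l u) = ennreal (c * measure lborel (box l u))"
proof -
  let ?T = "\<lambda>x. L x + a"
  have pre: "?T -` box l u = L' ` (\<lambda>y. y - a) ` box l u"
    by (force simp: image_iff L'L LL' intro: exI[of _ "L x + a" for x])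
  have "?T -` box l u \<in> sets lborel"
    using borel_measurable_linear_affine[OF assms(1), of a] by (simp add: measurable_sets_borel)
  then have "emeasure lborel (?T -` box l u) = emeasure lebesgue (?T -` box l u)"
    by simp
  also have "\<dots> = ennreal (measure lebesgue (?T -` box l u))"
    unfolding pre using c
    by (intro emeasure_eq_measure2) (simp add: scales_lebesgue_def measurable_translation_subtract)
  also have "measure lebesgue (?T -` box l u) = c * measure lborel (box l u)"
    unfolding pre using c
    by (simp add: scales_lebesgue_def measurable_translation_subtract measure_translation_subtract)
  finally show ?thesis .
qed

lemma lborel_eq_density_distr_affine:
  fixes L L' :: "real^'n \<Rightarrow> real^'n"
  assumes "linear L" "linear L'" and L'L: "\<And>x. L' (L x) = x" and LL': "\<And>y. L (L' y) = y"
  shows "\<exists>k>0. lborel = density (distr lborel borel (\<lambda>x. L x + a)) (\<lambda>_. ennreal k)"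
proof -
  obtain c where c: "scales_lebesgue L' c"
    using linear_scales_lebesgue[OF assms(2)] by blast
  have "c > 0" using scales_lebesgue_inverse_pos[OF assms(1) LL' c] .
  let ?T = "\<lambda>x. L x + a"
  show ?thesis
  proof (intro exI conjI)
    show "1 / c > 0" using \<open>c > 0\<close> by simp
    show "lborel = density (distr lborel borel ?T) (\<lambda>_. ennreal (1 / c))"
    proof (rule lborel_eqI)
      fix l u :: "real^'n" assume le: "\<And>b. b \<in> Basis \<Longrightarrow> l \<bullet> b \<le> u \<bullet> b"
      have "emeasure (density (distr lborel borel ?T) (\<lambda>_. ennreal (1 / c))) (box l u)
          = ennreal (1 / c) * ennreal (c * measure lborel (box l u))"
        using borel_measurable_linear_affine[OF assms(1)]
        by (simp add: emeasure_density emeasure_distr nn_integral_cmult_indicator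
            emeasure_lborel_vimage_affine_box[OF assms(1) L'L LL' c])
      also have "\<dots> = ennreal (\<Prod>b\<in>Basis. (u - l) \<bullet> b)"
        using \<open>c > 0\<close> le by (simp add: measure_lborel_box_eq ennreal_mult'[symmetric])
      finally show "emeasure (density (distr lborel borel ?T) (\<lambda>_. ennreal (1 / c))) (box l u)
          = (\<Prod>b\<in>Basis. (u - l) \<bullet> b)" .
    qed simp
  qed
qed

lemma distr_density_affine:
  fixes L L' :: "real^'n \<Rightarrow> real^'n"
  assumes "linear L" "linear L'" and L'L: "\<And>x. L' (L x) = x" and LL': "\<And>y. L (L' y) = y"
  shows "\<exists>c>0. \<forall>f \<in> borel_measurable borel.
    distr (density lborel f) lborel (\<lambda>x. L x + a) = density lborel (\<lambda>y. ennreal c * f (L' (y - a)))"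
proof -
  let ?T = "\<lambda>x. L x + a"
  obtain k where "k > 0" and k: "lborel = density (distr lborel borel ?T) (\<lambda>_. ennreal k)"
    using lborel_eq_density_distr_affine[OF assms, where a = a] by (elim exE conjE) (rule that)
  have T_borel: "?T \<in> borel_measurable borel"
    using borel_measurable_linear_affine[OF assms(1)] .
  have L': "bounded_linear L'" using \<open>linear L'\<close> by (simp add: linear_conv_bounded_linear)
  have L'_borel: "(\<lambda>y. L' (y - a)) \<in> borel_measurable borel"
    by (intro borel_measurable_continuous_onI bounded_linear.continuous_on[OF L'] continuous_intros)
  have change: "(\<integral>\<^sup>+ y. h y \<partial>lborel) = (\<integral>\<^sup>+ x. ennreal k * h (?T x) \<partial>lborel)"
    if "h \<in> borel_measurable borel" for h
    using that T_borel
    by (subst k) (simp add: nn_integral_density nn_integral_distr)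
  show ?thesis
  proof (intro exI[of _ "1 / k"] conjI ballI)
    show "1 / k > 0" using \<open>k > 0\<close> by simp
    fix f :: "real^'n \<Rightarrow> ennreal" assume f: "f \<in> borel_measurable borel"
    show "distr (density lborel f) lborel ?T = density lborel (\<lambda>y. ennreal (1 / k) * f (L' (y - a)))"
    proof (rule measure_eqI)
      fix B assume "B \<in> sets (distr (density lborel f) lborel ?T)"
      then have B: "B \<in> sets borel" by simp
      have "emeasure (density lborel (\<lambda>y. ennreal (1 / k) * f (L' (y - a)))) B
          = (\<integral>\<^sup>+ x. ennreal k * (ennreal (1 / k) * f x * indicator B (?T x)) \<partial>lborel)"
        using B f L'_borel by (simp add: emeasure_density change L'L)
      also have "\<dots> = (\<integral>\<^sup>+ x. f x * indicator (?T -` B) x \<partial>lborel)"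
        using \<open>k > 0\<close> by (intro nn_integral_cong)
          (simp add: mult.assoc[symmetric] ennreal_mult[symmetric] indicator_def)
      also have "\<dots> = emeasure (distr (density lborel f) lborel ?T) B"
        using B f T_borel by (simp add: emeasure_distr emeasure_density measurable_sets_borel)
      finally show "emeasure (distr (density lborel f) lborel ?T) B
          = emeasure (density lborel (\<lambda>y. ennreal (1 / k) * f (L' (y - a)))) B" ..
    qed simp
  qed
qed

section \<open>Truncated Gaussians under affine maps\<close>

lemma open_affine_image:
  fixes A :: "real^'n^'n"
  assumes "invertible A" and "open S"
  shows "open ((\<lambda>x. A *v x + a) ` S)"
proof -
  have "surj ((*v) A)" using matrix_inv_vector_cancel(2)[OF assms(1)] by (metis surjI)
  then have "open ((*v) A ` S)"
    using open_surjective_linear_image assms(2) matrix_vector_mul_linear by blast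
  then show ?thesis
    using open_translation[of "(*v) A ` S" a] by (simp add: image_image add.commute)
qed

lemma distr_trunc_gauss_affine:
  fixes A S :: "real^'n^'n" and a :: "real^'n"
  assumes "open \<Omega>" "bounded \<Omega>" "\<Omega> \<noteq> {}" "sym_posdef S" and "invertible A"
  defines "T \<equiv> \<lambda>x. A *v x + a"
  shows "\<exists>c>0. distr (trunc_gauss \<Omega> m S) lborel T = density lborel
    (\<lambda>y. ennreal (c * indicator (T ` \<Omega>) y * gauss_weight (A *v m + a) (A ** S ** transpose A) y))"
proof -
  let ?Z = "gauss_const \<Omega> m S"
  have "?Z > 0" using gauss_const_pos[OF assms(1-4)] .
  have lin: "linear ((*v) A)" "linear ((*v) (matrix_inv A))"
    by (simp_all add: matrix_vector_mul_linear)
  obtain c where "c > 0" and c: "\<forall>f \<in> borel_measurable borel.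
      distr (density lborel f) lborel T = density lborel (\<lambda>y. ennreal c * f (matrix_inv A *v (y - a)))"
    using distr_density_affine[OF lin matrix_inv_vector_cancel[OF assms(5)], of a, folded T_def]
    by (elim exE conjE) (rule that)
  have "matrix_inv A *v (y - a) \<in> \<Omega> \<longleftrightarrow> y \<in> T ` \<Omega>" for y
  proof
    assume "matrix_inv A *v (y - a) \<in> \<Omega>"
    moreover have "y = T (matrix_inv A *v (y - a))"
      by (simp add: T_def matrix_inv_vector_cancel assms(5))
    ultimately show "y \<in> T ` \<Omega>" by blast
  next
    assume "y \<in> T ` \<Omega>"
    then show "matrix_inv A *v (y - a) \<in> \<Omega>"
      by (auto simp: T_def matrix_inv_vector_cancel assms(5))
  qed
  then have "ennreal c * ennreal (indicator \<Omega> (matrix_inv A *v (y - a))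
        * gauss_weight m S (matrix_inv A *v (y - a)) / ?Z)
      = ennreal (c / ?Z * indicator (T ` \<Omega>) y * gauss_weight (A *v m + a) (A ** S ** transpose A) y)" for y
    using \<open>c > 0\<close> \<open>?Z > 0\<close> gauss_weight_pos[of "A *v m + a" "A ** S ** transpose A" y]
    by (simp add: gauss_weight_affine_image assms(5) sym_posdef_invertible[OF assms(4)]
        ennreal_mult[symmetric] indicator_def)
  moreover have [measurable]: "\<Omega> \<in> sets borel" using assms(1) by simp
  then have "(\<lambda>x. ennreal (indicator \<Omega> x * gauss_weight m S x / ?Z)) \<in> borel_measurable borel"
    by measurable
  ultimately show ?thesis
    unfolding trunc_gauss_def using \<open>c > 0\<close> \<open>?Z > 0\<close> c by (intro exI[of _ "c / ?Z"]) auto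
qed

lemma density_indicator_eqD:
  fixes g h :: "'a::euclidean_space \<Rightarrow> real"
  assumes "open U" "open V" "continuous_on UNIV g" "continuous_on UNIV h" "\<And>y. g y > 0" "\<And>y. h y > 0"
    and eq: "density lborel (\<lambda>y. ennreal (indicator U y * g y))
      = density lborel (\<lambda>y. ennreal (indicator V y * h y))"
  shows "sym_diff V U \<in> null_sets lborel" and "\<And>y. y \<in> U \<inter> V \<Longrightarrow> g y = h y"
proof -
  have g: "g \<in> borel_measurable borel" and h: "h \<in> borel_measurable borel"
    using assms(3,4) by (simp_all add: borel_measurable_continuous_onI)
  have nonneg: "0 \<le> g y" "0 \<le> h y" for y
    using assms(5,6) less_imp_le by blast+
  have "AE y in lborel. ennreal (indicator U y * g y) = ennreal (indicator V y * h y)"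
    using assms(1,2) g h by (intro sigma_finite_measure.density_unique[OF sigma_finite_lborel _ _ eq]) auto
  then have ae: "AE y in lborel. indicator U y * g y = indicator V y * h y"
    by eventually_elim (simp add: indicator_def nonneg)
  have "AE y in lborel. y \<notin> sym_diff V U"
    using ae
  proof eventually_elim
    fix y assume "indicator U y * g y = indicator V y * h y"
    then show "y \<notin> sym_diff V U"
      using assms(5,6)[of y] by (cases "y \<in> U"; cases "y \<in> V") auto
  qed
  then show "sym_diff V U \<in> null_sets lborel"
    using assms(1,2) by (subst AE_iff_null_sets) auto
  have "AE y in lebesgue. y \<in> U \<inter> V \<longrightarrow> y \<in> {y. g y = h y}"
    using AE_completion[OF ae] by eventually_elim auto
  then show "g y = h y" if "y \<in> U \<inter> V" for y
    using mem_closed_if_AE_lebesgue_open[of "U \<inter> V" "{y. g y = h y}" y] that assms(1-4)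
    by (auto intro: closed_Collect_eq)
qed

lemma open_Int_nonempty_if_sym_diff_null:
  fixes U V :: "'a::euclidean_space set"
  assumes "open U" "open V" "V \<noteq> {}" and "sym_diff V U \<in> null_sets lborel"
  shows "U \<inter> V \<noteq> {}"
proof
  assume "U \<inter> V = {}"
  then have "V \<subseteq> sym_diff V U" by blast
  then have "V \<in> null_sets lborel"
    using null_sets_subset[OF assms(4)] assms(2) by simp
  then show False using open_nonempty_not_null_lborel[OF assms(2,3)] by blast
qed

lemma density_gauss_eq_trunc_gaussD:
  fixes U \<Omega> :: "(real^'n) set"
  assumes "open U" "open \<Omega>" "bounded \<Omega>" "\<Omega> \<noteq> {}" "sym_posdef S" "sym_posdef S'" "c > 0"
    and eq: "density lborel (\<lambda>y. ennreal (c * indicator U y * gauss_weight m' S' y)) = trunc_gauss \<Omega> m S"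
  shows "sym_diff \<Omega> U \<in> null_sets lborel" and "m = m'" and "S = S'"
proof -
  let ?Z = "gauss_const \<Omega> m S"
  have "?Z > 0" using gauss_const_pos[OF assms(2-5)] .
  then have "trunc_gauss \<Omega> m S = density lborel (\<lambda>y. ennreal (indicator \<Omega> y * (gauss_weight m S y / ?Z)))"
    by (simp add: trunc_gauss_def)
  with eq have eq': "density lborel (\<lambda>y. ennreal (indicator U y * (c * gauss_weight m' S' y)))
      = density lborel (\<lambda>y. ennreal (indicator \<Omega> y * (gauss_weight m S y / ?Z)))"
    by (simp add: ac_simps)
  have cont: "continuous_on UNIV (\<lambda>y. c * gauss_weight m' S' y)"
    "continuous_on UNIV (\<lambda>y. gauss_weight m S y / ?Z)"
    using \<open>?Z > 0\<close> by (auto intro!: continuous_intros continuous_on_gauss_weight)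
  have pos: "c * gauss_weight m' S' y > 0" "gauss_weight m S y / ?Z > 0" for y
    using \<open>c > 0\<close> \<open>?Z > 0\<close> gauss_weight_pos by (auto intro: mult_pos_pos divide_pos_pos)
  note dens = density_indicator_eqD[OF assms(1,2) cont pos eq']
  show null: "sym_diff \<Omega> U \<in> null_sets lborel"
    using dens(1) .
  obtain y0 where "y0 \<in> U \<inter> \<Omega>"
    using open_Int_nonempty_if_sym_diff_null[OF assms(1,2,4) null] by blast
  then obtain r where "r > 0" and ball: "ball y0 r \<subseteq> U \<inter> \<Omega>"
    using open_Int[OF assms(1,2)] openE by blast
  have "1 / ?Z * gauss_weight m S y = c * gauss_weight m' S' y" if "y \<in> ball y0 r" for y
  proof -
    have "y \<in> U \<inter> \<Omega>" using that ball by blast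
    then show ?thesis using dens(2) by simp
  qed
  moreover have "1 / ?Z > 0" using \<open>?Z > 0\<close> by simp
  ultimately show "m = m'" and "S = S'"
    using gauss_weight_proportional_on_ball_imp_eq[OF assms(5,6) _ \<open>c > 0\<close> \<open>r > 0\<close>] by blast+
qed

lemma density_gauss_eq_trunc_gaussI:
  fixes U \<Omega> :: "(real^'n) set"
  assumes "open U" "open \<Omega>" "bounded \<Omega>" "\<Omega> \<noteq> {}" "sym_posdef S" "c \<ge> 0"
    and null: "sym_diff \<Omega> U \<in> null_sets lborel"
    and mass: "emeasure (density lborel (\<lambda>y. ennreal (c * indicator U y * gauss_weight m S y))) UNIV = 1"
  shows "density lborel (\<lambda>y. ennreal (c * indicator U y * gauss_weight m S y)) = trunc_gauss \<Omega> m S"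
proof -
  let ?Z = "gauss_const \<Omega> m S"
  have same: "density lborel (\<lambda>y. ennreal (c * indicator U y * gauss_weight m S y))
      = density lborel (\<lambda>y. ennreal (c * indicator \<Omega> y * gauss_weight m S y))"
  proof (rule density_cong)
    have [measurable]: "U \<in> sets borel" "\<Omega> \<in> sets borel" using assms(1,2) by simp_all
    show "(\<lambda>y. ennreal (c * indicator U y * gauss_weight m S y)) \<in> borel_measurable lborel"
      "(\<lambda>y. ennreal (c * indicator \<Omega> y * gauss_weight m S y)) \<in> borel_measurable lborel"
      by measurable
    show "AE y in lborel. ennreal (c * indicator U y * gauss_weight m S y)
        = ennreal (c * indicator \<Omega> y * gauss_weight m S y)"
      by (rule AE_I'[OF null]) (auto simp: indicator_def)
  qed
  have "ennreal (c * ?Z) = 1"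
    using mass emeasure_density_gauss_weight[OF assms(2-6)] unfolding same by simp
  then have "c = 1 / ?Z"
    using gauss_const_pos[OF assms(2-5), of m] by (simp add: field_simps)
  then show ?thesis
    unfolding same trunc_gauss_eq_density by simp
qed

lemma density_gauss_eq_trunc_gauss_iff:
  fixes U \<Omega> :: "(real^'n) set"
  assumes "open U" "open \<Omega>" "bounded \<Omega>" "\<Omega> \<noteq> {}" "sym_posdef S" "sym_posdef S'" "c > 0"
    and mass: "emeasure (density lborel (\<lambda>y. ennreal (c * indicator U y * gauss_weight m' S' y))) UNIV = 1"
  shows "density lborel (\<lambda>y. ennreal (c * indicator U y * gauss_weight m' S' y)) = trunc_gauss \<Omega> m S
    \<longleftrightarrow> sym_diff \<Omega> U \<in> null_sets lborel \<and> m = m' \<and> S = S'"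
proof
  assume "density lborel (\<lambda>y. ennreal (c * indicator U y * gauss_weight m' S' y)) = trunc_gauss \<Omega> m S"
  then show "sym_diff \<Omega> U \<in> null_sets lborel \<and> m = m' \<and> S = S'"
    using density_gauss_eq_trunc_gaussD[OF assms(1-7)] by blast
next
  assume "sym_diff \<Omega> U \<in> null_sets lborel \<and> m = m' \<and> S = S'"
  then have null: "sym_diff \<Omega> U \<in> null_sets lborel" and "m' = m" "S' = S" by auto
  then show "density lborel (\<lambda>y. ennreal (c * indicator U y * gauss_weight m' S' y)) = trunc_gauss \<Omega> m S"
    using density_gauss_eq_trunc_gaussI[OF assms(1-5) less_imp_le[OF assms(7)] null] mass by simp
qed

section \<open>Affine Monge maps\<close>

lemma convex_on_quadratic_form:
  fixes A :: "real^'n^'n"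
  assumes "sym_posdef A"
  shows "convex_on UNIV (\<lambda>x. x \<bullet> (A *v x))"
proof (rule convex_onI)
  fix t :: real and x y :: "real^'n"
  assume "0 < t" "t < 1"
  have symA: "transpose A = A" using assms by (simp add: sym_posdef_def)
  define d where "d = y - x"
  have "0 \<le> d \<bullet> (A *v d)"
    using assms unfolding sym_posdef_def by (cases "d = 0") (auto intro: less_imp_le)
  then have "0 \<le> t * (1 - t) * (d \<bullet> (A *v d))"
    using \<open>0 < t\<close> \<open>t < 1\<close> by simp
  moreover have "(1 - t) *\<^sub>R x + t *\<^sub>R y = x + t *\<^sub>R d" and "y = x + d"
    by (simp_all add: d_def algebra_simps)
  ultimately show "((1 - t) *\<^sub>R x + t *\<^sub>R y) \<bullet> (A *v ((1 - t) *\<^sub>R x + t *\<^sub>R y))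
      \<le> (1 - t) * (x \<bullet> (A *v x)) + t * (y \<bullet> (A *v y))"
    using quadratic_form_add[OF symA, of x "t *\<^sub>R d"] quadratic_form_add[OF symA, of x d]
    by (simp add: matrix_vector_mult_scaleR algebra_simps power2_eq_square)
qed simp

lemma has_derivative_quadratic_potential:
  fixes A :: "real^'n^'n"
  assumes "transpose A = A"
  shows "((\<lambda>x. (1/2) * (x \<bullet> (A *v x)) + a \<bullet> x) has_derivative (\<lambda>h. (A *v x + a) \<bullet> h)) (at x)"
proof -
  have "((\<lambda>x. (1/2) * (x \<bullet> (A *v x)) + a \<bullet> x)
      has_derivative (\<lambda>h. (1/2) * (x \<bullet> (A *v h) + h \<bullet> (A *v x)) + a \<bullet> h)) (at x)"
    using bounded_linear_imp_has_derivative[OF matrix_vector_mul_bounded_linear]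
    by (intro derivative_eq_intros) auto
  moreover have "(1/2) * (x \<bullet> (A *v h) + h \<bullet> (A *v x)) + a \<bullet> h = (A *v x + a) \<bullet> h" for h
    using inner_symmetric_matrix[OF assms, of x h]
    by (simp add: inner_add_left inner_add_right inner_commute[of _ h])
  ultimately show ?thesis by simp
qed

lemma monge_map_affine_iff:
  fixes A :: "real^'n^'n"
  assumes "sym_posdef A" and "sets \<mu> = sets borel"
  shows "monge_map \<mu> \<nu> (\<lambda>x. A *v x + a) \<longleftrightarrow> distr \<mu> lborel (\<lambda>x. A *v x + a) = \<nu>"
proof -
  have "(\<lambda>x. A *v x + a) \<in> borel_measurable \<mu>"
    unfolding measurable_cong_sets[OF assms(2) refl]
    by (rule borel_measurable_linear_affine[OF matrix_vector_mul_linear])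
  moreover have "convex_on UNIV (\<lambda>x. a \<bullet> x)"
    by (rule convex_onI) (simp_all add: inner_add_right)
  then have "convex_on UNIV (\<lambda>x. (1/2) * (x \<bullet> (A *v x)) + a \<bullet> x)"
    using convex_on_quadratic_form[OF assms(1)] by (intro convex_on_add convex_on_cmul) auto
  moreover have "AE x in \<mu>. ((\<lambda>x. (1/2) * (x \<bullet> (A *v x)) + a \<bullet> x) has_derivative (\<lambda>h. (A *v x + a) \<bullet> h)) (at x)"
    using assms(1) by (intro AE_I2 has_derivative_quadratic_potential) (simp add: sym_posdef_def)
  ultimately show ?thesis
    unfolding monge_map_def by blast
qed

theorem proposition3p12:
  fixes \<Omega>0 \<Omega>1 :: "(real^'n) set" and \<Sigma>0 \<Sigma>1 :: "real^'n^'n" and m0 m1 :: "real^'n"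
  assumes "lipschitz_domain \<Omega>0" "bounded \<Omega>0" "interior \<Omega>0 \<noteq> {}"
    and "lipschitz_domain \<Omega>1" "bounded \<Omega>1" "interior \<Omega>1 \<noteq> {}"
    and "sym_posdef \<Sigma>0" "sym_posdef \<Sigma>1"
  shows "\<forall>(A::real^'n^'n) (a::real^'n). sym_posdef A \<longrightarrow>
     (monge_map (trunc_gauss \<Omega>0 m0 \<Sigma>0) (trunc_gauss \<Omega>1 m1 \<Sigma>1) (\<lambda>x. A *v x + a)
      \<longleftrightarrow>
      ((\<Omega>1 - (\<lambda>x. A *v x + a) ` \<Omega>0) \<union> ((\<lambda>x. A *v x + a) ` \<Omega>0 - \<Omega>1) \<in> null_sets lborel
       \<and> m1 = A *v m0 + a \<and> \<Sigma>1 = A ** \<Sigma>0 ** A))"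
proof (intro allI impI)
  fix A :: "real^'n^'n" and a :: "real^'n"
  assume A: "sym_posdef A"
  let ?T = "\<lambda>x. A *v x + a" and ?\<mu> = "trunc_gauss \<Omega>0 m0 \<Sigma>0"
  have \<Omega>0: "open \<Omega>0" "\<Omega>0 \<noteq> {}" and \<Omega>1: "open \<Omega>1" "\<Omega>1 \<noteq> {}"
    using assms(1,4) by (simp_all add: lipschitz_domain_def)
  have "invertible A" and tA: "transpose A = A"
    using A by (simp_all add: sym_posdef_invertible sym_posdef_def)
  obtain c where "c > 0" and distr: "distr ?\<mu> lborel ?T = density lborel
      (\<lambda>y. ennreal (c * indicator (?T ` \<Omega>0) y * gauss_weight (A *v m0 + a) (A ** \<Sigma>0 ** A) y))"
    using distr_trunc_gauss_affine[OF \<Omega>0(1) assms(2) \<Omega>0(2) assms(7) \<open>invertible A\<close>, where a = a and m = m0]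
    unfolding tA by (elim exE conjE) (rule that)
  have "emeasure (distr ?\<mu> lborel ?T) UNIV = 1"
    using emeasure_trunc_gauss_UNIV[OF \<Omega>0(1) assms(2) \<Omega>0(2) assms(7)]
    by (simp add: emeasure_distr measurable_cong_sets[OF sets_trunc_gauss refl]
        borel_measurable_linear_affine[OF matrix_vector_mul_linear] space_trunc_gauss)
  moreover have "sym_posdef (A ** \<Sigma>0 ** A)"
    using sym_posdef_congruence[OF \<open>invertible A\<close> assms(7)] tA by simp
  ultimately show "monge_map ?\<mu> (trunc_gauss \<Omega>1 m1 \<Sigma>1) ?T \<longleftrightarrow>
      (\<Omega>1 - ?T ` \<Omega>0) \<union> (?T ` \<Omega>0 - \<Omega>1) \<in> null_sets lborel \<and> m1 = A *v m0 + a \<and> \<Sigma>1 = A ** \<Sigma>0 ** A"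
    unfolding monge_map_affine_iff[OF A sets_trunc_gauss] distr
    using density_gauss_eq_trunc_gauss_iff[OF open_affine_image[OF \<open>invertible A\<close> \<Omega>0(1)]
        \<Omega>1(1) assms(5) \<Omega>1(2) assms(8) _ \<open>c > 0\<close>] by simp
qed

end
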